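(* Let $(S,M)$ be a surface with marked points and empty boundary. (a) If $(S,M)$ is not a sphere with $4$ or $5$ punctures, it has an ideal triangulation satisfying (T4). (b) If $(S,M)$ is a sphere with $5$ punctures, it has an ideal triangulation satisfying (T3$\tfrac12$), but no ideal triangulation satisfying (T4). (c) If $(S,M)$ is a sphere with $4$ punctures, it has an ideal triangulation satisfying (T3), but no ideal triangulation satisfying (T3$\tfrac12$).
   Context: $(S,M)$: $S$ compact, connected, oriented surface without boundary, $M$ a finite non-empty set of punctures, admitting ideal triangulations (not a sphere with fewer than four punctures). Arcs incident to a puncture are counted with multiplicity (an arc with both endpoints at the puncture counts twice). (T3): at each puncture at least three arcs of $T$ are incident. (T3$\tfrac12$): $T$ has (T3) and every arc of $T$ has an endpoint with at least four incident arcs. (T4): at each puncture at least four arcs of $T$ are incident. *)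

theory Defs
  imports Main
begin

text \<open>
A triangulation consists of m triangles numbered 0..<m; triangle t
has corners (t,0),(t,1),(t,2) (in the cyclic order given by the orientation)
and sides (t,i), side (t,i) running from corner (t,i) to corner (t,(i+1) mod 3).
The gluing gl is a fixed-point-free involution on the sides; gluing side (t,i)
to side (t',j) is orientation-reversing, i.e. it identifies corner (t,i) with
corner (t',(j+1) mod 3) and corner (t,(i+1) mod 3) with corner (t',j).
Self-gluings of sides of the same triangle (self-folded triangles) are allowed.
Arcs are the gl-orbits of sides; punctures are the classes of corners.
\<close>

definition sides :: "nat \<Rightarrow> (nat \<times> nat) set" where
  "sides m = {0..<m} \<times> {0..<3}"

definition side_start :: "nat \<times> nat \<Rightarrow> nat \<times> nat" where
  "side_start s = s"

definition side_end :: "nat \<times> nat \<Rightarrow> nat \<times> nat" where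
  "side_end s = (fst s, (snd s + 1) mod 3)"

definition is_gluing :: "nat \<Rightarrow> (nat \<times> nat \<Rightarrow> nat \<times> nat) \<Rightarrow> bool" where
  "is_gluing m gl \<longleftrightarrow> 0 < m \<and>
     (\<forall>s\<in>sides m. gl s \<in> sides m \<and> gl s \<noteq> s \<and> gl (gl s) = s)"

definition corner_glue :: "nat \<Rightarrow> (nat \<times> nat \<Rightarrow> nat \<times> nat) \<Rightarrow> ((nat \<times> nat) \<times> (nat \<times> nat)) set" where
  "corner_glue m gl =
     {(side_start s, side_end (gl s)) | s. s \<in> sides m} \<union>
     {(side_end s, side_start (gl s)) | s. s \<in> sides m}"

definition vert_rel :: "nat \<Rightarrow> (nat \<times> nat \<Rightarrow> nat \<times> nat) \<Rightarrow> ((nat \<times> nat) \<times> (nat \<times> nat)) set" where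
  "vert_rel m gl = (corner_glue m gl \<union> (corner_glue m gl)\<inverse>)\<^sup>*"

definition vertex_of :: "nat \<Rightarrow> (nat \<times> nat \<Rightarrow> nat \<times> nat) \<Rightarrow> nat \<times> nat \<Rightarrow> (nat \<times> nat) set" where
  "vertex_of m gl c = vert_rel m gl `` {c}"

definition punctures :: "nat \<Rightarrow> (nat \<times> nat \<Rightarrow> nat \<times> nat) \<Rightarrow> (nat \<times> nat) set set" where
  "punctures m gl = sides m // vert_rel m gl"

definition num_arcs :: "nat \<Rightarrow> nat" where
  "num_arcs m = card (sides m) div 2"

text \<open>Number of arcs incident to puncture v, counted with multiplicity (a loop
  at v counts twice).  Summing endpoint incidences over all sides counts every
  arc end twice (once for each of the two sides forming the arc).\<close>
definition degree :: "nat \<Rightarrow> (nat \<times> nat \<Rightarrow> nat \<times> nat) \<Rightarrow> (nat \<times> nat) set \<Rightarrow> nat" where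
  "degree m gl v =
     (\<Sum>s\<in>sides m. (if vertex_of m gl (side_start s) = v then 1 else 0)
                   + (if vertex_of m gl (side_end s) = v then 1 else 0)) div 2"

definition tri_adj :: "nat \<Rightarrow> (nat \<times> nat \<Rightarrow> nat \<times> nat) \<Rightarrow> (nat \<times> nat) set" where
  "tri_adj m gl = {(fst s, fst (gl s)) | s. s \<in> sides m}"

definition tri_connected :: "nat \<Rightarrow> (nat \<times> nat \<Rightarrow> nat \<times> nat) \<Rightarrow> bool" where
  "tri_connected m gl \<longleftrightarrow> (\<forall>t<m. \<forall>t'<m. (t, t') \<in> (tri_adj m gl)\<^sup>*)"

definition ideal_triangulation :: "nat \<Rightarrow> nat \<Rightarrow> nat \<Rightarrow> (nat \<times> nat \<Rightarrow> nat \<times> nat) \<Rightarrow> bool" where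
  "ideal_triangulation g n m gl \<longleftrightarrow>
     is_gluing m gl \<and> tri_connected m gl \<and> card (punctures m gl) = n \<and>
     int (card (punctures m gl)) - int (num_arcs m) + int m = 2 - 2 * int g"

definition T3 :: "nat \<Rightarrow> (nat \<times> nat \<Rightarrow> nat \<times> nat) \<Rightarrow> bool" where
  "T3 m gl \<longleftrightarrow> (\<forall>v\<in>punctures m gl. 3 \<le> degree m gl v)"

definition T4 :: "nat \<Rightarrow> (nat \<times> nat \<Rightarrow> nat \<times> nat) \<Rightarrow> bool" where
  "T4 m gl \<longleftrightarrow> (\<forall>v\<in>punctures m gl. 4 \<le> degree m gl v)"

definition T3half :: "nat \<Rightarrow> (nat \<times> nat \<Rightarrow> nat \<times> nat) \<Rightarrow> bool" where
  "T3half m gl \<longleftrightarrow> T3 m gl \<and>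
     (\<forall>s\<in>sides m. 4 \<le> degree m gl (vertex_of m gl (side_start s))
                 \<or> 4 \<le> degree m gl (vertex_of m gl (side_end s)))"

end

theory Submission
  imports Defs
begin

text \<open>
  All triangulations with the required degrees are constructed explicitly. For genus g \<ge> 1,
  a cyclic chain of k = n + 2 g - 2 squares, each cut by a diagonal into two triangles, is an
  annulus; gluing the top of square j to the bottom of square \<pi> j, where \<pi> swaps 2 i - 1 and 2 i
  for 0 < i < g, gives the surface of genus g with n punctures, and every puncture meets at least
  four corners. The sphere with k + 2 \<ge> 5 punctures is the double pyramid over a k-gon: its
  apexes have degree k, its equatorial punctures degree 4, and every arc ends on the equator.
  The sphere with four punctures is the tetrahedron.

  Conversely, Euler's formula forces 2 n - 4 triangles on the sphere with n punctures, so the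
  degrees sum to 6 n - 12. For n = 5 this is 18 < 4 \<cdot> 5; for n = 4 it is 12, which leaves no room
  for a puncture of degree 4 beside three of degree at least 3.
\<close>

section \<open>Punctures and degrees of a gluing\<close>

lemma mem_sides_iff: "s \<in> sides m \<longleftrightarrow> fst s < m \<and> snd s < 3"
  by (cases s) (simp add: sides_def)

lemma Pair_mem_sides [simp]: "(t, i) \<in> sides m \<longleftrightarrow> t < m \<and> i < 3"
  by (simp add: sides_def)

lemma finite_sides [simp]: "finite (sides m)"
  by (simp add: sides_def)

lemma card_sides: "card (sides m) = 3 * m"
  by (simp add: sides_def card_cartesian_product)

lemma num_arcs_double: "num_arcs (2 * k) = 3 * k"
  by (simp add: num_arcs_def card_sides)

lemma side_end_mem_sides: "s \<in> sides m \<Longrightarrow> side_end s \<in> sides m"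
  by (simp add: mem_sides_iff side_end_def)

lemma side_end_simps [simp]:
  "side_end (t, 0) = (t, 1)" "side_end (t, Suc 0) = (t, 2)" "side_end (t, 2) = (t, 0)"
  by (simp_all add: side_end_def)

lemma gluing_mem_sides: "is_gluing m gl \<Longrightarrow> s \<in> sides m \<Longrightarrow> gl s \<in> sides m"
  and gluing_involution: "is_gluing m gl \<Longrightarrow> s \<in> sides m \<Longrightarrow> gl (gl s) = s"
  by (simp_all add: is_gluing_def)

lemma bij_betw_gluing: "is_gluing m gl \<Longrightarrow> bij_betw gl (sides m) (sides m)"
  by (rule bij_betw_byWitness[where f' = gl]) (auto simp: is_gluing_def)

text \<open>Gluing side s to side gl s identifies corner s with corner turn gl s, so iterating
  turn walks around the puncture at s.\<close>

definition turn :: "(nat \<times> nat \<Rightarrow> nat \<times> nat) \<Rightarrow> nat \<times> nat \<Rightarrow> nat \<times> nat" where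
  "turn gl s = side_end (gl s)"

lemma turn_mem_sides: "is_gluing m gl \<Longrightarrow> s \<in> sides m \<Longrightarrow> turn gl s \<in> sides m"
  by (simp add: turn_def gluing_mem_sides side_end_mem_sides)

lemma turn_gluing: "is_gluing m gl \<Longrightarrow> s \<in> sides m \<Longrightarrow> turn gl (gl s) = side_end s"
  by (simp add: turn_def gluing_involution)

lemma equiv_vert_rel: "equiv UNIV (vert_rel m gl)"
  unfolding equiv_def vert_rel_def
  by (auto simp: refl_rtrancl trans_rtrancl sym_rtrancl sym_Un_converse)

lemma vert_rel_refl [simp]: "(a, a) \<in> vert_rel m gl"
  by (simp add: vert_rel_def)

lemma vert_rel_sym: "(a, b) \<in> vert_rel m gl \<Longrightarrow> (b, a) \<in> vert_rel m gl"
  using equiv_vert_rel by (metis equivE symE)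

lemma vert_rel_trans:
  "(a, b) \<in> vert_rel m gl \<Longrightarrow> (b, c) \<in> vert_rel m gl \<Longrightarrow> (a, c) \<in> vert_rel m gl"
  unfolding vert_rel_def by (rule rtrancl_trans)

lemma vert_rel_turn: "s \<in> sides m \<Longrightarrow> (s, turn gl s) \<in> vert_rel m gl"
  unfolding vert_rel_def turn_def corner_glue_def side_start_def
  by (rule r_into_rtrancl) blast

lemma vert_rel_turnI: "s \<in> sides m \<Longrightarrow> turn gl s = x \<Longrightarrow> (s, x) \<in> vert_rel m gl"
  using vert_rel_turn by blast

lemma vert_rel_closed:
  assumes "is_gluing m gl" and "(a, b) \<in> vert_rel m gl" and "a \<in> sides m"
  shows "b \<in> sides m"
proof -
  have "x \<in> sides m \<and> y \<in> sides m" if "(x, y) \<in> corner_glue m gl \<union> (corner_glue m gl)\<inverse>" for x y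
    using that assms(1) side_end_mem_sides gluing_mem_sides
    unfolding corner_glue_def side_start_def by blast
  with assms(2,3) show ?thesis
    unfolding vert_rel_def by (induction rule: rtrancl_induct) blast+
qed

lemma vert_rel_turn_invariant:
  assumes gl: "is_gluing m gl" and lab_turn: "\<And>s. s \<in> sides m \<Longrightarrow> lab (turn gl s) = lab s"
    and "(a, b) \<in> vert_rel m gl"
  shows "lab a = lab b"
proof -
  have "lab x = lab y" if "(x, y) \<in> corner_glue m gl" for x y
  proof -
    from that obtain s where s: "s \<in> sides m"
      and "(x, y) = (s, turn gl s) \<or> (x, y) = (side_end s, gl s)"
      unfolding corner_glue_def side_start_def turn_def by blast
    then show ?thesis
      using lab_turn[of s] lab_turn[of "gl s"] turn_gluing[OF gl s] gluing_mem_sides[OF gl s]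
      by auto
  qed
  with assms(3) show ?thesis
    unfolding vert_rel_def by (induction rule: rtrancl_induct) auto
qed

lemma vertex_of_eq_iff: "vertex_of m gl a = vertex_of m gl b \<longleftrightarrow> (a, b) \<in> vert_rel m gl"
  unfolding vertex_of_def using equiv_class_eq_iff[OF equiv_vert_rel] by simp

lemma mem_vertex_of_iff: "b \<in> vertex_of m gl a \<longleftrightarrow> (a, b) \<in> vert_rel m gl"
  by (simp add: vertex_of_def)

lemma vertex_of_subset_sides: "is_gluing m gl \<Longrightarrow> a \<in> sides m \<Longrightarrow> vertex_of m gl a \<subseteq> sides m"
  using vert_rel_closed unfolding vertex_of_def by blast

lemma punctures_eq_image: "punctures m gl = vertex_of m gl ` sides m"
  unfolding punctures_def quotient_def vertex_of_def by blast

lemma finite_punctures [simp]: "finite (punctures m gl)"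
  by (simp add: punctures_eq_image)

lemma vertex_of_eq_fibre:
  assumes "is_gluing m gl" and "a \<in> sides m"
  shows "vertex_of m gl a = {s \<in> sides m. vertex_of m gl s = vertex_of m gl a}"
proof -
  have "s \<in> vertex_of m gl a \<longleftrightarrow> s \<in> sides m \<and> vertex_of m gl s = vertex_of m gl a" for s
    using vert_rel_closed[OF assms(1) _ assms(2), of s] vert_rel_sym[of a s m gl]
      vert_rel_sym[of s a m gl]
    unfolding vertex_of_eq_iff mem_vertex_of_iff by blast
  then show ?thesis by blast
qed

lemma degree_vertex_of:
  assumes gl: "is_gluing m gl" and a: "a \<in> sides m"
  shows "degree m gl (vertex_of m gl a) = card (vertex_of m gl a)"
proof -
  let ?v = "vertex_of m gl a"
  let ?ind = "\<lambda>s. if vertex_of m gl s = ?v then 1 else 0 :: nat"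
  have end_gluing: "vertex_of m gl (side_end s) = vertex_of m gl (gl s)" if "s \<in> sides m" for s
  proof -
    have "(gl s, side_end s) \<in> vert_rel m gl"
      using vert_rel_turn[where gl = gl, OF gluing_mem_sides[OF gl that]] turn_gluing[OF gl that]
      by simp
    then show ?thesis unfolding vertex_of_eq_iff by (rule vert_rel_sym)
  qed
  have "(\<Sum>s\<in>sides m. ?ind (side_end s)) = (\<Sum>s\<in>sides m. ?ind (gl s))"
    by (rule sum.cong) (simp_all add: end_gluing)
  also have "\<dots> = (\<Sum>s\<in>sides m. ?ind s)"
    using sum.reindex_bij_betw[OF bij_betw_gluing[OF gl]] .
  finally have "degree m gl ?v = (2 * (\<Sum>s\<in>sides m. ?ind s)) div 2"
    unfolding degree_def side_start_def sum.distrib by simp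
  also have "\<dots> = card {s \<in> sides m. vertex_of m gl s = ?v}"
    by (simp add: sum.If_cases Int_def)
  finally show ?thesis
    unfolding vertex_of_eq_fibre[OF gl a, symmetric] .
qed

lemma sum_degree_punctures:
  assumes gl: "is_gluing m gl"
  shows "(\<Sum>v\<in>punctures m gl. degree m gl v) = 3 * m"
proof -
  have "(\<Sum>v\<in>punctures m gl. degree m gl v) = (\<Sum>v\<in>punctures m gl. card v)"
    unfolding punctures_eq_image using degree_vertex_of[OF gl] by (intro sum.cong) auto
  also have "\<dots> = card (\<Union>(punctures m gl))"
  proof (rule card_Union_disjoint[symmetric])
    have quotient: "punctures m gl \<subseteq> UNIV // vert_rel m gl"
      unfolding punctures_def quotient_def by blast
    show "pairwise disjnt (punctures m gl)"
    proof (rule pairwiseI)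
      fix u v assume "u \<in> punctures m gl" "v \<in> punctures m gl" "u \<noteq> v"
      then show "disjnt u v"
        using quotient quotient_disj[OF equiv_vert_rel, where X = u and Y = v]
        by (auto simp: disjnt_def)
    qed
    show "finite v" if v: "v \<in> punctures m gl" for v
    proof -
      obtain a where "a \<in> sides m" "v = vertex_of m gl a"
        using v unfolding punctures_eq_image by blast
      then show ?thesis
        using rev_finite_subset[OF finite_sides vertex_of_subset_sides[OF gl]] by simp
    qed
  qed
  also have "\<Union>(punctures m gl) = sides m"
  proof
    show "\<Union>(punctures m gl) \<subseteq> sides m"
      using vertex_of_subset_sides[OF gl] unfolding punctures_eq_image by blast
    show "sides m \<subseteq> \<Union>(punctures m gl)"
    proof
      fix s assume "s \<in> sides m"
      moreover have "s \<in> vertex_of m gl s" by (simp add: mem_vertex_of_iff)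
      ultimately show "s \<in> \<Union>(punctures m gl)" unfolding punctures_eq_image by blast
    qed
  qed
  finally show ?thesis by (simp add: card_sides)
qed

lemma tri_connectedI:
  assumes gl: "is_gluing m gl"
    and descent: "\<And>t. 0 < t \<Longrightarrow> t < m \<Longrightarrow> \<exists>s\<in>sides m. fst s = t \<and> fst (gl s) < t"
  shows "tri_connected m gl"
proof -
  let ?R = "(tri_adj m gl)\<^sup>*"
  have adj_sym: "(fst (gl s), fst s) \<in> tri_adj m gl" if "s \<in> sides m" for s
  proof -
    have "(fst (gl s), fst (gl (gl s))) \<in> tri_adj m gl"
      using gluing_mem_sides[OF gl that] unfolding tri_adj_def by blast
    then show ?thesis using gluing_involution[OF gl that] by simp
  qed
  have "(0, t) \<in> ?R \<and> (t, 0) \<in> ?R" if "t < m" for t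
    using that
  proof (induction t rule: less_induct)
    case (less t)
    show ?case
    proof (cases "t = 0")
      case False
      then obtain s where s: "s \<in> sides m" "fst s = t" "fst (gl s) < t"
        using descent less.prems by blast
      moreover have "(fst s, fst (gl s)) \<in> tri_adj m gl"
        using s(1) unfolding tri_adj_def by blast
      ultimately have "(t, fst (gl s)) \<in> tri_adj m gl" "(fst (gl s), t) \<in> tri_adj m gl"
        using adj_sym[OF s(1)] by simp_all
      moreover have "(0, fst (gl s)) \<in> ?R \<and> (fst (gl s), 0) \<in> ?R"
        using less.IH[of "fst (gl s)"] s less.prems by simp
      ultimately show ?thesis
        by (blast intro: rtrancl_into_rtrancl converse_rtrancl_into_rtrancl)
    qed simp
  qed
  then show ?thesis
    unfolding tri_connected_def by (meson rtrancl_trans)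
qed

section \<open>Punctures from a corner labelling\<close>

lemma card_image_eq_if_same_fibres:
  assumes "\<And>x y. x \<in> A \<Longrightarrow> y \<in> A \<Longrightarrow> f x = f y \<longleftrightarrow> h x = h y"
  shows "card (f ` A) = card (h ` A)"
proof -
  let ?P = "(\<lambda>x. (f x, h x)) ` A"
  have "inj_on fst ?P" "inj_on snd ?P"
    using assms by (auto simp: inj_on_def)
  then have "card (fst ` ?P) = card (snd ` ?P)"
    by (simp add: card_image)
  moreover have "fst ` ?P = f ` A" "snd ` ?P = h ` A"
    by (simp_all add: image_image)
  ultimately show ?thesis by simp
qed

text \<open>A corner labelling that is constant around punctures determines the punctures once each
  corner is linked to a fixed representative corner of its label.\<close>

locale puncture_labelling =
  fixes m :: nat and gl :: "nat \<times> nat \<Rightarrow> nat \<times> nat"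
    and lab :: "nat \<times> nat \<Rightarrow> 'l" and rep :: "'l \<Rightarrow> nat \<times> nat"
  assumes gluing: "is_gluing m gl"
    and lab_turn: "\<And>s. s \<in> sides m \<Longrightarrow> lab (turn gl s) = lab s"
    and vert_rel_rep: "\<And>s. s \<in> sides m \<Longrightarrow> (s, rep (lab s)) \<in> vert_rel m gl"
begin

lemma vertex_of_eq_iff_lab:
  assumes "s \<in> sides m" "t \<in> sides m"
  shows "vertex_of m gl s = vertex_of m gl t \<longleftrightarrow> lab s = lab t"
  using vert_rel_turn_invariant[of m gl lab, OF gluing lab_turn] vert_rel_rep[OF assms(1)]
    vert_rel_rep[OF assms(2)]
  by (metis vertex_of_eq_iff vert_rel_sym vert_rel_trans)

lemma card_punctures: "card (punctures m gl) = card (lab ` sides m)"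
  unfolding punctures_eq_image
  by (rule card_image_eq_if_same_fibres) (rule vertex_of_eq_iff_lab)

lemma degree_eq_card_label:
  assumes "s \<in> sides m"
  shows "degree m gl (vertex_of m gl s) = card {t \<in> sides m. lab t = lab s}"
proof -
  have "vertex_of m gl s = {t \<in> sides m. vertex_of m gl t = vertex_of m gl s}"
    by (rule vertex_of_eq_fibre[OF gluing assms])
  also have "\<dots> = {t \<in> sides m. lab t = lab s}"
    using vertex_of_eq_iff_lab assms by blast
  finally show ?thesis
    using degree_vertex_of[OF gluing assms] by simp
qed

lemma T4I: "(\<And>s. s \<in> sides m \<Longrightarrow> 4 \<le> card {t \<in> sides m. lab t = lab s}) \<Longrightarrow> T4 m gl"
  by (auto simp: T4_def punctures_eq_image degree_eq_card_label)

lemma T3I: "(\<And>s. s \<in> sides m \<Longrightarrow> 3 \<le> card {t \<in> sides m. lab t = lab s}) \<Longrightarrow> T3 m gl"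
  by (auto simp: T3_def punctures_eq_image degree_eq_card_label)

lemma T3halfI:
  assumes "\<And>s. s \<in> sides m \<Longrightarrow> 3 \<le> card {t \<in> sides m. lab t = lab s}"
    and "\<And>s. s \<in> sides m \<Longrightarrow> 4 \<le> card {t \<in> sides m. lab t = lab s}
      \<or> 4 \<le> card {t \<in> sides m. lab t = lab (side_end s)}"
  shows "T3half m gl"
  using T3I[OF assms(1)] assms(2) side_end_mem_sides
  unfolding T3half_def side_start_def by (simp add: degree_eq_card_label)

end

section \<open>Surfaces of positive genus\<close>

definition cyc_succ :: "nat \<Rightarrow> nat \<Rightarrow> nat" where
  "cyc_succ k j = (if j + 1 = k then 0 else j + 1)"

definition cyc_pred :: "nat \<Rightarrow> nat \<Rightarrow> nat" where
  "cyc_pred k j = (if j = 0 then k - 1 else j - 1)"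

lemma cyc_succ_less: "j < k \<Longrightarrow> cyc_succ k j < k"
  and cyc_pred_less: "j < k \<Longrightarrow> cyc_pred k j < k"
  and cyc_succ_pred [simp]: "j < k \<Longrightarrow> cyc_succ k (cyc_pred k j) = j"
  and cyc_pred_succ [simp]: "j < k \<Longrightarrow> cyc_pred k (cyc_succ k j) = j"
  by (auto simp: cyc_succ_def cyc_pred_def)

lemma sides_double_cases [consumes 1]:
  assumes "s \<in> sides (2 * k)"
  obtains j where "j < k" "s = (2 * j, 0)"
  | j where "j < k" "s = (2 * j, Suc 0)"
  | j where "j < k" "s = (2 * j, 2)"
  | j where "j < k" "s = (Suc (2 * j), 0)"
  | j where "j < k" "s = (Suc (2 * j), Suc 0)"
  | j where "j < k" "s = (Suc (2 * j), 2)"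
proof -
  obtain t i where s: "s = (t, i)" "t < 2 * k" "i < 3"
    using assms by (cases s) simp
  define j where "j = t div 2"
  have "j < k" "t = 2 * j \<or> t = Suc (2 * j)" "i = 0 \<or> i = Suc 0 \<or> i = 2"
    using s by (auto simp: j_def)
  then show ?thesis
    using that s by blast
qed

lemma Suc_double_less_double_iff [simp]: "Suc (2 * a) < 2 * b \<longleftrightarrow> a < b"
  by linarith

definition handle_swap :: "nat \<Rightarrow> nat \<Rightarrow> nat" where
  "handle_swap g j = (if 1 \<le> j \<and> j + 2 \<le> 2 * g then (if odd j then j + 1 else j - 1) else j)"

lemma handle_swap_involution [simp]: "handle_swap g (handle_swap g j) = j"
  unfolding handle_swap_def by (auto; presburger)

lemma handle_swap_less: "j < k \<Longrightarrow> 2 * g \<le> k + 1 \<Longrightarrow> handle_swap g j < k"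
  unfolding handle_swap_def by (auto; presburger)

text \<open>Square j consists of triangles 2 j and 2 j + 1, with top side (2 j, 0), left side (2 j, 2),
  diagonal (2 j, 1) = (2 j + 1, 0), right side (2 j + 1, 1) and bottom side (2 j + 1, 2).
  With handle_swap = id the result is a torus; each transposition of 2 i - 1 and 2 i adds a handle.\<close>

definition genus_gluing :: "nat \<Rightarrow> nat \<Rightarrow> nat \<times> nat \<Rightarrow> nat \<times> nat" where
  "genus_gluing k g s = (let t = fst s; i = snd s; j = t div 2 in
     if even t then
       (if i = 0 then (Suc (2 * handle_swap g j), 2)
        else if i = 1 then (Suc t, 0) else (Suc (2 * cyc_pred k j), Suc 0))
     else
       (if i = 0 then (t - 1, Suc 0)
        else if i = 1 then (2 * cyc_succ k j, 2) else (2 * handle_swap g j, 0)))"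

lemma genus_gluing_simps [simp]:
  "genus_gluing k g (2 * j, 0) = (Suc (2 * handle_swap g j), 2)"
  "genus_gluing k g (2 * j, Suc 0) = (Suc (2 * j), 0)"
  "genus_gluing k g (2 * j, 2) = (Suc (2 * cyc_pred k j), Suc 0)"
  "genus_gluing k g (Suc (2 * j), 0) = (2 * j, Suc 0)"
  "genus_gluing k g (Suc (2 * j), Suc 0) = (2 * cyc_succ k j, 2)"
  "genus_gluing k g (Suc (2 * j), 2) = (2 * handle_swap g j, 0)"
  by (simp_all add: genus_gluing_def)

lemma turn_genus_gluing [simp]:
  "turn (genus_gluing k g) (2 * j, 0) = (Suc (2 * handle_swap g j), 0)"
  "turn (genus_gluing k g) (2 * j, Suc 0) = (Suc (2 * j), Suc 0)"
  "turn (genus_gluing k g) (2 * j, 2) = (Suc (2 * cyc_pred k j), 2)"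
  "turn (genus_gluing k g) (Suc (2 * j), 0) = (2 * j, 2)"
  "turn (genus_gluing k g) (Suc (2 * j), Suc 0) = (2 * cyc_succ k j, 0)"
  "turn (genus_gluing k g) (Suc (2 * j), 2) = (2 * handle_swap g j, Suc 0)"
  by (simp_all add: turn_def side_end_def)

lemma is_gluing_genus_gluing:
  assumes "0 < k" "2 * g \<le> k + 1"
  shows "is_gluing (2 * k) (genus_gluing k g)"
proof -
  have "genus_gluing k g s \<in> sides (2 * k) \<and> genus_gluing k g s \<noteq> s
      \<and> genus_gluing k g (genus_gluing k g s) = s" if "s \<in> sides (2 * k)" for s
    using that handle_swap_less[OF _ assms(2)]
    by (cases rule: sides_double_cases) (simp_all add: cyc_succ_less cyc_pred_less)
  then show ?thesis
    using assms by (simp add: is_gluing_def)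
qed

text \<open>Square genus_anchor k g s has its top-left corner at the puncture of corner s.\<close>

definition genus_anchor :: "nat \<Rightarrow> nat \<Rightarrow> nat \<times> nat \<Rightarrow> nat" where
  "genus_anchor k g s = (let j = fst s div 2 in
     if even (fst s) then [j, cyc_succ k j, handle_swap g j] ! snd s
     else [handle_swap g j, cyc_succ k j, cyc_succ k (handle_swap g j)] ! snd s)"

lemma genus_anchor_simps [simp]:
  "genus_anchor k g (2 * j, 0) = j"
  "genus_anchor k g (2 * j, Suc 0) = cyc_succ k j"
  "genus_anchor k g (2 * j, 2) = handle_swap g j"
  "genus_anchor k g (Suc (2 * j), 0) = handle_swap g j"
  "genus_anchor k g (Suc (2 * j), Suc 0) = cyc_succ k j"
  "genus_anchor k g (Suc (2 * j), 2) = cyc_succ k (handle_swap g j)"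
  by (simp_all add: genus_anchor_def)

text \<open>The punctures, indexed by square: if n \<ge> 2, the top-left corners of the squares
  1, ..., 2 g - 1 lie at one puncture and every other square has a puncture of its own;
  if n = 1 then k = 2 g - 1 and square 0 joins the others.\<close>

definition genus_class :: "nat \<Rightarrow> nat \<Rightarrow> nat \<Rightarrow> nat" where
  "genus_class n g y = (if n = 1 then 1 else if 1 \<le> y \<and> y < 2 * g then 1 else y)"

definition genus_label :: "nat \<Rightarrow> nat \<Rightarrow> nat \<Rightarrow> nat \<times> nat \<Rightarrow> nat" where
  "genus_label k g n s = genus_class n g (genus_anchor k g s)"

definition genus_rep :: "nat \<Rightarrow> nat \<Rightarrow> nat \<times> nat" where
  "genus_rep n l = (2 * (if n = 1 then 0 else l), 0)"

context
  fixes g n k :: nat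
  assumes g: "1 \<le> g" and n: "1 \<le> n" and k: "k = n + 2 * g - 2"
begin

private abbreviation "genus_vert_rel \<equiv> vert_rel (2 * k) (genus_gluing k g)"

lemma genus_squares: "0 < k" "2 * g \<le> k + 1"
  using g n k by auto

lemma genus_swap_less: "j < k \<Longrightarrow> handle_swap g j < k"
  using handle_swap_less genus_squares by blast

lemma genus_gluing_is_gluing: "is_gluing (2 * k) (genus_gluing k g)"
  using is_gluing_genus_gluing genus_squares by blast

lemma genus_anchor_less:
  assumes "s \<in> sides (2 * k)"
  shows "genus_anchor k g s < k"
  using assms by (cases rule: sides_double_cases) (simp_all add: cyc_succ_less genus_swap_less)

lemma genus_class_succ_swap:
  "j < k \<Longrightarrow>
    genus_class n g (cyc_succ k (handle_swap g j)) = genus_class n g (handle_swap g (cyc_succ k j))"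
  using g n k unfolding genus_class_def cyc_succ_def handle_swap_def by (auto; presburger)

lemma genus_label_turn:
  assumes "s \<in> sides (2 * k)"
  shows "genus_label k g n (turn (genus_gluing k g) s) = genus_label k g n s"
  unfolding genus_label_def using assms
  by (cases rule: sides_double_cases)
    (simp_all add: genus_class_succ_swap[of "cyc_pred k _"] cyc_pred_less)

lemma vert_rel_genus_anchor:
  assumes s: "s \<in> sides (2 * k)"
  shows "(s, (2 * genus_anchor k g s, 0)) \<in> genus_vert_rel"
  using s
proof (cases rule: sides_double_cases)
  case (2 j)
  have "((2 * j, Suc 0), (Suc (2 * j), Suc 0)) \<in> genus_vert_rel"
    "((Suc (2 * j), Suc 0), (2 * cyc_succ k j, 0)) \<in> genus_vert_rel"
    using 2 by (simp_all add: vert_rel_turnI)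
  from vert_rel_trans[OF this] 2 show ?thesis by simp
next
  case (3 j)
  have "((2 * handle_swap g j, 0), (Suc (2 * j), 0)) \<in> genus_vert_rel"
    "((Suc (2 * j), 0), (2 * j, 2)) \<in> genus_vert_rel"
    using 3 genus_swap_less by (simp_all add: vert_rel_turnI)
  from vert_rel_sym[OF vert_rel_trans[OF this]] 3 show ?thesis by simp
next
  case (4 j)
  have "((2 * handle_swap g j, 0), (Suc (2 * j), 0)) \<in> genus_vert_rel"
    using 4 genus_swap_less by (simp add: vert_rel_turnI)
  from vert_rel_sym[OF this] 4 show ?thesis by simp
next
  case (6 j)
  let ?p = "handle_swap g j"
  have "((Suc (2 * j), 2), (2 * ?p, Suc 0)) \<in> genus_vert_rel"
    "((2 * ?p, Suc 0), (Suc (2 * ?p), Suc 0)) \<in> genus_vert_rel"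
    "((Suc (2 * ?p), Suc 0), (2 * cyc_succ k ?p, 0)) \<in> genus_vert_rel"
    using 6 genus_swap_less by (simp_all add: vert_rel_turnI)
  from vert_rel_trans[OF vert_rel_trans[OF this(1,2)] this(3)] 6 show ?thesis by simp
qed (simp_all add: vert_rel_turnI)

lemma vert_rel_genus_top_left:
  assumes j: "j < k"
  shows "((2 * handle_swap g (cyc_succ k j), 0), (2 * cyc_succ k (handle_swap g j), 0))
    \<in> genus_vert_rel"
proof -
  let ?j' = "cyc_succ k j"
  have j': "?j' < k" "handle_swap g ?j' < k"
    using j by (simp_all add: cyc_succ_less genus_swap_less)
  have "((2 * handle_swap g ?j', 0), (Suc (2 * ?j'), 0)) \<in> genus_vert_rel"
    "((Suc (2 * ?j'), 0), (2 * ?j', 2)) \<in> genus_vert_rel"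
    "((2 * ?j', 2), (Suc (2 * j), 2)) \<in> genus_vert_rel"
    using j j' by (simp_all add: vert_rel_turnI)
  moreover have "((Suc (2 * j), 2), (2 * cyc_succ k (handle_swap g j), 0)) \<in> genus_vert_rel"
    using vert_rel_genus_anchor[of "(Suc (2 * j), 2)"] j by simp
  ultimately show ?thesis by (blast intro: vert_rel_trans)
qed

lemma vert_rel_genus_handle_corner:
  "1 \<le> y \<Longrightarrow> y < 2 * g \<Longrightarrow> y < k \<Longrightarrow> ((2 * y, 0), (2, 0)) \<in> genus_vert_rel"
proof (induction y rule: less_induct)
  case (less y)
  consider "y = 1" | "y = 2" | "3 \<le> y" using less.prems by linarith
  then show ?case
  proof cases
    case 2
    then have "handle_swap g (cyc_succ k 0) = 2" "cyc_succ k (handle_swap g 0) = 1"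
      using less.prems by (simp_all add: cyc_succ_def handle_swap_def)
    then show ?thesis
      using vert_rel_genus_top_left[of 0] 2 less.prems by simp
  next
    case 3
    let ?j = "y - 2"
    have "{handle_swap g (cyc_succ k ?j), cyc_succ k (handle_swap g ?j)} = {?j, y}"
      using 3 less.prems unfolding cyc_succ_def handle_swap_def by (auto; presburger)
    then consider "handle_swap g (cyc_succ k ?j) = ?j" "cyc_succ k (handle_swap g ?j) = y"
      | "handle_swap g (cyc_succ k ?j) = y" "cyc_succ k (handle_swap g ?j) = ?j"
      by (auto simp: doubleton_eq_iff)
    then have "((2 * ?j, 0), (2 * y, 0)) \<in> genus_vert_rel"
      using vert_rel_genus_top_left[of ?j] less.prems
      by cases (simp_all add: vert_rel_sym[of "(2 * y, 0)"])
    moreover have "((2 * ?j, 0), (2, 0)) \<in> genus_vert_rel"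
      using less.IH[of ?j] 3 less.prems by simp
    ultimately show ?thesis by (blast intro: vert_rel_sym vert_rel_trans)
  qed simp
qed

lemma vert_rel_genus_rep:
  assumes y: "y < k"
  shows "((2 * y, 0), genus_rep n (genus_class n g y)) \<in> genus_vert_rel"
proof (cases "n = 1 \<and> y \<noteq> 0")
  case True
  then have g2: "2 \<le> g" and k1: "k = 2 * g - 1" using y g k by auto
  then have "handle_swap g (cyc_succ k (k - 1)) = 0"
    "cyc_succ k (handle_swap g (k - 1)) = 2 * g - 2"
    unfolding cyc_succ_def handle_swap_def by (auto; presburger)+
  then have "((0, 0), (2 * (2 * g - 2), 0)) \<in> genus_vert_rel"
    using vert_rel_genus_top_left[of "k - 1"] y by simp
  moreover have "((2 * (2 * g - 2), 0), (2, 0)) \<in> genus_vert_rel"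
    "((2 * y, 0), (2, 0)) \<in> genus_vert_rel"
    using vert_rel_genus_handle_corner g2 y True k1 by auto
  ultimately show ?thesis
    using True by (simp add: genus_rep_def) (blast intro: vert_rel_sym vert_rel_trans)
next
  case False
  then show ?thesis
    using vert_rel_genus_handle_corner y by (auto simp: genus_rep_def genus_class_def)
qed

lemma genus_puncture_labelling:
  "puncture_labelling (2 * k) (genus_gluing k g) (genus_label k g n) (genus_rep n)"
proof
  fix s assume s: "s \<in> sides (2 * k)"
  show "(s, genus_rep n (genus_label k g n s)) \<in> genus_vert_rel"
    using vert_rel_genus_anchor[OF s] vert_rel_genus_rep[OF genus_anchor_less[OF s]]
    unfolding genus_label_def by (rule vert_rel_trans)
qed (simp_all add: genus_gluing_is_gluing genus_label_turn)

lemma genus_label_image: "genus_label k g n ` sides (2 * k) = genus_class n g ` {..<k}"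
proof -
  have "genus_anchor k g ` sides (2 * k) = {..<k}"
  proof
    show "genus_anchor k g ` sides (2 * k) \<subseteq> {..<k}"
      using genus_anchor_less by blast
    show "{..<k} \<subseteq> genus_anchor k g ` sides (2 * k)"
    proof
      fix y assume "y \<in> {..<k}"
      then show "y \<in> genus_anchor k g ` sides (2 * k)"
        by (intro rev_image_eqI[of "(2 * y, 0)"]) simp_all
    qed
  qed
  moreover have
    "genus_label k g n ` sides (2 * k) = genus_class n g ` genus_anchor k g ` sides (2 * k)"
    by (simp add: image_image genus_label_def)
  ultimately show ?thesis by simp
qed

lemma card_genus_classes: "card (genus_class n g ` {..<k}) = n"
proof (cases "n = 1")
  case True
  then have "genus_class n g ` {..<k} = {1}"
    using genus_squares by (auto simp: genus_class_def)
  then show ?thesis using True by simp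
next
  case False
  have classes: "genus_class n g y = (if y = 0 then 0 else if y < 2 * g then 1 else y)" for y
    using False by (simp add: genus_class_def)
  have "genus_class n g ` {..<k} = {0, 1} \<union> {2 * g..<k}"
  proof
    show "genus_class n g ` {..<k} \<subseteq> {0, 1} \<union> {2 * g..<k}"
      by (auto simp: classes)
    have "1 < k" "2 * g \<le> k" using False g n k by auto
    show "{0, 1} \<union> {2 * g..<k} \<subseteq> genus_class n g ` {..<k}"
    proof
      fix x assume "x \<in> {0, 1} \<union> {2 * g..<k}"
      then have "x < k \<and> genus_class n g x = x"
        using g \<open>1 < k\<close> \<open>2 * g \<le> k\<close> by (auto simp: classes)
      then show "x \<in> genus_class n g ` {..<k}" by (metis lessThan_iff rev_image_eqI)
    qed
  qed
  moreover have "card ({0, 1} \<union> {2 * g..<k}) = n"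
    using False g n k by (subst card_Un_disjoint) auto
  ultimately show ?thesis by simp
qed

lemma genus_fibre_card:
  assumes s: "s \<in> sides (2 * k)"
  shows "4 \<le> card {t \<in> sides (2 * k). genus_label k g n t = genus_label k g n s}"
proof -
  let ?y = "genus_anchor k g s"
  let ?p = "cyc_pred k ?y"
  have y: "?y < k" "?p < k" "handle_swap g ?y < k"
    using genus_anchor_less[OF s] by (simp_all add: cyc_pred_less genus_swap_less)
  have "{(2 * ?y, 0), (2 * ?p, Suc 0), (Suc (2 * ?p), Suc 0), (2 * handle_swap g ?y, 2)}
      \<subseteq> {t \<in> sides (2 * k). genus_label k g n t = genus_label k g n s}"
    using y by (simp add: genus_label_def)
  from card_mono[OF _ this] show ?thesis by simp
qed

lemma genus_gluing_connected: "tri_connected (2 * k) (genus_gluing k g)"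
proof (rule tri_connectedI[OF genus_gluing_is_gluing])
  fix t assume t: "0 < t" "t < 2 * k"
  show "\<exists>s\<in>sides (2 * k). fst s = t \<and> fst (genus_gluing k g s) < t"
  proof (cases "even t")
    case True
    then obtain j where j: "t = 2 * j" "0 < j" "j < k" using t by (auto elim!: evenE)
    then have "fst (genus_gluing k g (2 * j, 2)) < t" by (simp add: cyc_pred_def)
    then show ?thesis using j by (intro bexI[of _ "(2 * j, 2)"]) simp_all
  next
    case False
    then obtain j where j: "t = Suc (2 * j)" "j < k" using t by (auto elim!: oddE)
    then show ?thesis by (intro bexI[of _ "(Suc (2 * j), 0)"]) simp_all
  qed
qed

lemma genus_triangulation_T4:
  "ideal_triangulation g n (2 * k) (genus_gluing k g) \<and> T4 (2 * k) (genus_gluing k g)"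
proof -
  interpret puncture_labelling "2 * k" "genus_gluing k g" "genus_label k g n" "genus_rep n"
    by (rule genus_puncture_labelling)
  have "card (punctures (2 * k) (genus_gluing k g)) = n"
    using card_punctures genus_label_image card_genus_classes by simp
  moreover have "T4 (2 * k) (genus_gluing k g)"
    using T4I genus_fibre_card by blast
  ultimately show ?thesis
    using gluing genus_gluing_connected k g n
    by (simp add: ideal_triangulation_def num_arcs_double)
qed

end

lemma exists_T4_positive_genus:
  assumes "1 \<le> g" "1 \<le> n"
  shows "\<exists>m gl. ideal_triangulation g n m gl \<and> T4 m gl"
  using genus_triangulation_T4[OF assms refl] by blast

section \<open>Spheres with at least five punctures\<close>

text \<open>The double pyramid over a k-gon: triangle 2 j (resp. 2 j + 1) has corner 0 at the north
  (resp. south) pole and side 1 on the equator, between equatorial punctures j and j + 1.\<close>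

definition bipyramid_gluing :: "nat \<Rightarrow> nat \<times> nat \<Rightarrow> nat \<times> nat" where
  "bipyramid_gluing k s = (let t = fst s; i = snd s; j = t div 2 in
     if even t then
       (if i = 0 then (2 * cyc_pred k j, 2)
        else if i = 1 then (Suc t, Suc 0) else (2 * cyc_succ k j, 0))
     else
       (if i = 0 then (Suc (2 * cyc_succ k j), 2)
        else if i = 1 then (t - 1, Suc 0) else (Suc (2 * cyc_pred k j), 0)))"

lemma bipyramid_gluing_simps [simp]:
  "bipyramid_gluing k (2 * j, 0) = (2 * cyc_pred k j, 2)"
  "bipyramid_gluing k (2 * j, Suc 0) = (Suc (2 * j), Suc 0)"
  "bipyramid_gluing k (2 * j, 2) = (2 * cyc_succ k j, 0)"
  "bipyramid_gluing k (Suc (2 * j), 0) = (Suc (2 * cyc_succ k j), 2)"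
  "bipyramid_gluing k (Suc (2 * j), Suc 0) = (2 * j, Suc 0)"
  "bipyramid_gluing k (Suc (2 * j), 2) = (Suc (2 * cyc_pred k j), 0)"
  by (simp_all add: bipyramid_gluing_def)

lemma turn_bipyramid_gluing [simp]:
  "turn (bipyramid_gluing k) (2 * j, 0) = (2 * cyc_pred k j, 0)"
  "turn (bipyramid_gluing k) (2 * j, Suc 0) = (Suc (2 * j), 2)"
  "turn (bipyramid_gluing k) (2 * j, 2) = (2 * cyc_succ k j, Suc 0)"
  "turn (bipyramid_gluing k) (Suc (2 * j), 0) = (Suc (2 * cyc_succ k j), 0)"
  "turn (bipyramid_gluing k) (Suc (2 * j), Suc 0) = (2 * j, 2)"
  "turn (bipyramid_gluing k) (Suc (2 * j), 2) = (Suc (2 * cyc_pred k j), Suc 0)"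
  by (simp_all add: turn_def side_end_def)

definition bipyramid_label :: "nat \<Rightarrow> nat \<times> nat \<Rightarrow> nat" where
  "bipyramid_label k s = (let j = fst s div 2 in
     if even (fst s) then [0, j + 2, cyc_succ k j + 2] ! snd s
     else [1, cyc_succ k j + 2, j + 2] ! snd s)"

lemma bipyramid_label_simps [simp]:
  "bipyramid_label k (2 * j, 0) = 0"
  "bipyramid_label k (2 * j, Suc 0) = j + 2"
  "bipyramid_label k (2 * j, 2) = cyc_succ k j + 2"
  "bipyramid_label k (Suc (2 * j), 0) = 1"
  "bipyramid_label k (Suc (2 * j), Suc 0) = cyc_succ k j + 2"
  "bipyramid_label k (Suc (2 * j), 2) = j + 2"
  by (simp_all add: bipyramid_label_def)

definition bipyramid_rep :: "nat \<Rightarrow> nat \<times> nat" where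
  "bipyramid_rep l = (if l = 0 then (0, 0) else if l = 1 then (1, 0) else (2 * (l - 2), Suc 0))"

context
  fixes k :: nat
  assumes k: "3 \<le> k"
begin

private abbreviation "bipyramid_vert_rel \<equiv> vert_rel (2 * k) (bipyramid_gluing k)"

lemma bipyramid_is_gluing: "is_gluing (2 * k) (bipyramid_gluing k)"
proof -
  have "bipyramid_gluing k s \<in> sides (2 * k) \<and> bipyramid_gluing k s \<noteq> s
      \<and> bipyramid_gluing k (bipyramid_gluing k s) = s" if "s \<in> sides (2 * k)" for s
    using that by (cases rule: sides_double_cases) (simp_all add: cyc_succ_less cyc_pred_less)
  then show ?thesis
    using k by (simp add: is_gluing_def)
qed

lemma bipyramid_label_turn:
  assumes "s \<in> sides (2 * k)"
  shows "bipyramid_label k (turn (bipyramid_gluing k) s) = bipyramid_label k s"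
  using assms by (cases rule: sides_double_cases) simp_all

lemma vert_rel_north_pole: "j < k \<Longrightarrow> ((2 * j, 0), (0, 0)) \<in> bipyramid_vert_rel"
proof (induction j)
  case (Suc j)
  have "((2 * Suc j, 0), (2 * j, 0)) \<in> bipyramid_vert_rel"
    using Suc.prems vert_rel_turnI[of "(2 * Suc j, 0)" "2 * k" "bipyramid_gluing k"]
      turn_bipyramid_gluing(1)[of k "Suc j"]
    by (simp add: cyc_pred_def)
  from vert_rel_trans[OF this Suc.IH] Suc.prems show ?case by simp
qed simp

lemma vert_rel_south_pole: "j < k \<Longrightarrow> ((Suc (2 * j), 0), (Suc 0, 0)) \<in> bipyramid_vert_rel"
proof (induction j)
  case (Suc j)
  have "((Suc (2 * j), 0), (Suc (2 * Suc j), 0)) \<in> bipyramid_vert_rel"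
    using Suc.prems vert_rel_turnI[of "(Suc (2 * j), 0)" "2 * k" "bipyramid_gluing k"]
    by (simp add: cyc_succ_def)
  from vert_rel_trans[OF vert_rel_sym[OF this] Suc.IH] Suc.prems show ?case by simp
qed simp

lemma bipyramid_puncture_labelling:
  "puncture_labelling (2 * k) (bipyramid_gluing k) (bipyramid_label k) bipyramid_rep"
proof
  fix s assume "s \<in> sides (2 * k)"
  then show "(s, bipyramid_rep (bipyramid_label k s)) \<in> bipyramid_vert_rel"
  proof (cases rule: sides_double_cases)
    case (3 j)
    with vert_rel_turnI[of s "2 * k" "bipyramid_gluing k"] show ?thesis
      by (simp add: bipyramid_rep_def)
  next
    case (5 j)
    then have "(s, (2 * j, 2)) \<in> bipyramid_vert_rel"
      "((2 * j, 2), (2 * cyc_succ k j, Suc 0)) \<in> bipyramid_vert_rel"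
      by (simp_all add: vert_rel_turnI)
    from vert_rel_trans[OF this] 5 show ?thesis by (simp add: bipyramid_rep_def)
  next
    case (6 j)
    let ?p = "cyc_pred k j"
    have "?p < k" using 6 by (simp add: cyc_pred_less)
    with 6 have "(s, (Suc (2 * ?p), Suc 0)) \<in> bipyramid_vert_rel"
      "((Suc (2 * ?p), Suc 0), (2 * ?p, 2)) \<in> bipyramid_vert_rel"
      "((2 * ?p, 2), (2 * j, Suc 0)) \<in> bipyramid_vert_rel"
      by (simp_all add: vert_rel_turnI)
    from vert_rel_trans[OF vert_rel_trans[OF this(1,2)] this(3)] 6 show ?thesis
      by (simp add: bipyramid_rep_def)
  qed (simp_all add: bipyramid_rep_def vert_rel_north_pole vert_rel_south_pole)
qed (simp_all add: bipyramid_is_gluing bipyramid_label_turn)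

lemma bipyramid_label_image: "bipyramid_label k ` sides (2 * k) = {..<k + 2}"
proof
  show "bipyramid_label k ` sides (2 * k) \<subseteq> {..<k + 2}"
    by (auto elim!: sides_double_cases dest: cyc_succ_less)
  show "{..<k + 2} \<subseteq> bipyramid_label k ` sides (2 * k)"
  proof
    fix l assume l: "l \<in> {..<k + 2}"
    consider "l = 0" | "l = 1" | "2 \<le> l" by linarith
    then show "l \<in> bipyramid_label k ` sides (2 * k)"
    proof cases
      case 1
      have "(2 * 0, 0) \<in> sides (2 * k)" using k by simp
      with 1 show ?thesis by (intro rev_image_eqI[of "(0, 0)"]) (simp_all add: bipyramid_label_def)
    next
      case 2
      have "(Suc (2 * 0), 0) \<in> sides (2 * k)" using k by simp
      with 2 show ?thesis by (intro rev_image_eqI[of "(1, 0)"]) (simp_all add: bipyramid_label_def)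
    next
      case 3
      then have "(2 * (l - 2), Suc 0) \<in> sides (2 * k)" "bipyramid_label k (2 * (l - 2), Suc 0) = l"
        using l by simp_all
      then show ?thesis by (intro rev_image_eqI[of "(2 * (l - 2), Suc 0)"]) simp_all
    qed
  qed
qed

lemma bipyramid_label_cases:
  assumes "s \<in> sides (2 * k)"
  obtains "bipyramid_label k s \<le> 1" | j where "j < k" "bipyramid_label k s = j + 2"
  using assms by (cases rule: sides_double_cases) (auto dest: cyc_succ_less)

lemma bipyramid_pole_fibre_card:
  assumes "l \<le> 1"
  shows "k \<le> card {t \<in> sides (2 * k). bipyramid_label k t = l}"
proof -
  let ?apex = "\<lambda>j. (if l = 0 then 2 * j else Suc (2 * j), 0 :: nat)"
  have "?apex ` {..<k} \<subseteq> {t \<in> sides (2 * k). bipyramid_label k t = l}"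
    using assms by auto
  then have "card (?apex ` {..<k}) \<le> card {t \<in> sides (2 * k). bipyramid_label k t = l}"
    by (rule card_mono[rotated]) simp
  moreover have "card (?apex ` {..<k}) = k"
    by (subst card_image) (auto simp: inj_on_def)
  ultimately show ?thesis by simp
qed

lemma bipyramid_equator_fibre_card:
  assumes j: "j < k"
  shows "4 \<le> card {t \<in> sides (2 * k). bipyramid_label k t = j + 2}"
proof -
  let ?p = "cyc_pred k j"
  let ?Q = "{(2 * j, Suc 0), (Suc (2 * j), 2), (2 * ?p, 2), (Suc (2 * ?p), Suc 0)}"
  have "?p < k" using j by (simp add: cyc_pred_less)
  then have "card ?Q \<le> card {t \<in> sides (2 * k). bipyramid_label k t = j + 2}"
    using j by (intro card_mono) simp_all
  moreover have "2 * j \<noteq> Suc (2 * ?p)" "Suc (2 * j) \<noteq> 2 * ?p" by presburger+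
  then have "card ?Q = 4" by simp
  ultimately show ?thesis by simp
qed

lemma bipyramid_gluing_connected: "tri_connected (2 * k) (bipyramid_gluing k)"
proof (rule tri_connectedI[OF bipyramid_is_gluing])
  fix t assume t: "0 < t" "t < 2 * k"
  show "\<exists>s\<in>sides (2 * k). fst s = t \<and> fst (bipyramid_gluing k s) < t"
  proof (cases "even t")
    case True
    then obtain j where j: "t = 2 * j" "0 < j" "j < k" using t by (auto elim!: evenE)
    then have "fst (bipyramid_gluing k (2 * j, 0)) < t" by (simp add: cyc_pred_def)
    then show ?thesis using j by (intro bexI[of _ "(2 * j, 0)"]) simp_all
  next
    case False
    then obtain j where j: "t = Suc (2 * j)" "j < k" using t by (auto elim!: oddE)
    then show ?thesis by (intro bexI[of _ "(Suc (2 * j), Suc 0)"]) simp_all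
  qed
qed

lemma bipyramid_triangulation: "ideal_triangulation 0 (k + 2) (2 * k) (bipyramid_gluing k)"
proof -
  interpret puncture_labelling "2 * k" "bipyramid_gluing k" "bipyramid_label k" bipyramid_rep
    by (rule bipyramid_puncture_labelling)
  show ?thesis
    using gluing bipyramid_gluing_connected card_punctures bipyramid_label_image
    by (simp add: ideal_triangulation_def num_arcs_double)
qed

lemma bipyramid_fibre_card:
  assumes "s \<in> sides (2 * k)"
  shows "min 4 k \<le> card {t \<in> sides (2 * k). bipyramid_label k t = bipyramid_label k s}"
  using assms
proof (cases rule: bipyramid_label_cases)
  case 1
  then show ?thesis using bipyramid_pole_fibre_card[OF 1] by (simp add: min_le_iff_disj)
next
  case (2 j)
  then show ?thesis using bipyramid_equator_fibre_card[of j] by (simp add: min_le_iff_disj)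
qed

lemma bipyramid_T4:
  assumes "4 \<le> k"
  shows "T4 (2 * k) (bipyramid_gluing k)"
proof (rule puncture_labelling.T4I[OF bipyramid_puncture_labelling])
  fix s assume "s \<in> sides (2 * k)"
  from bipyramid_fibre_card[OF this] assms
  show "4 \<le> card {t \<in> sides (2 * k). bipyramid_label k t = bipyramid_label k s}"
    by (simp add: min_def)
qed

text \<open>For k = 3 the poles have degree 3, but every arc has an endpoint on the equator.\<close>

lemma bipyramid_T3half: "T3half (2 * k) (bipyramid_gluing k)"
proof (rule puncture_labelling.T3halfI[OF bipyramid_puncture_labelling])
  show "3 \<le> card {t \<in> sides (2 * k). bipyramid_label k t = bipyramid_label k s}"
    if "s \<in> sides (2 * k)" for s
    using bipyramid_fibre_card[OF that] k by (auto simp: min_le_iff_disj)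
  fix s assume s: "s \<in> sides (2 * k)"
  obtain j where "j < k" "bipyramid_label k s = j + 2 \<or> bipyramid_label k (side_end s) = j + 2"
    using s by (cases rule: sides_double_cases) (auto dest: cyc_succ_less)
  then show "4 \<le> card {t \<in> sides (2 * k). bipyramid_label k t = bipyramid_label k s}
    \<or> 4 \<le> card {t \<in> sides (2 * k). bipyramid_label k t = bipyramid_label k (side_end s)}"
    using bipyramid_equator_fibre_card by auto
qed

end

lemma exists_T4_sphere:
  assumes "6 \<le> n"
  shows "\<exists>m gl. ideal_triangulation 0 n m gl \<and> T4 m gl"
proof -
  have k: "3 \<le> n - 2" "4 \<le> n - 2" and n: "n - 2 + 2 = n" using assms by auto
  have "ideal_triangulation 0 n (2 * (n - 2)) (bipyramid_gluing (n - 2))"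
    using bipyramid_triangulation[OF k(1)] unfolding n .
  with bipyramid_T4[OF k] show ?thesis by blast
qed

lemma exists_T3half_sphere5: "\<exists>m gl. ideal_triangulation 0 5 m gl \<and> T3half m gl"
  using bipyramid_triangulation[of 3] bipyramid_T3half[of 3] by auto

section \<open>The sphere with four punctures\<close>

text \<open>The faces of a tetrahedron with vertices 0, 1, 2, 3, each listed in positive cyclic order;
  tetrahedron_gluing glues the faces along their common edges.\<close>

definition tetrahedron_label :: "nat \<times> nat \<Rightarrow> nat" where
  "tetrahedron_label s = [[0, 1, 2], [0, 2, 3], [0, 3, 1], [1, 3, 2]] ! fst s ! snd s"

definition tetrahedron_gluing :: "nat \<times> nat \<Rightarrow> nat \<times> nat" where
  "tetrahedron_gluing s =
    (if s = (0, 0) then (2, 2) else if s = (2, 2) then (0, 0)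
     else if s = (0, 1) then (3, 2) else if s = (3, 2) then (0, 1)
     else if s = (0, 2) then (1, 0) else if s = (1, 0) then (0, 2)
     else if s = (1, 1) then (3, 1) else if s = (3, 1) then (1, 1)
     else if s = (1, 2) then (2, 0) else if s = (2, 0) then (1, 2)
     else if s = (2, 1) then (3, 0) else if s = (3, 0) then (2, 1) else s)"

definition tetrahedron_rep :: "nat \<Rightarrow> nat \<times> nat" where
  "tetrahedron_rep l = [(0, 0), (0, 1), (0, 2), (1, 2)] ! l"

lemma sides_4:
  "sides 4 = {(0, 0), (0, 1), (0, 2), (1, 0), (1, 1), (1, 2),
              (2, 0), (2, 1), (2, 2), (3, 0), (3, 1), (3, 2)}"
proof -
  have "{0..<4::nat} = {0, 1, 2, 3}" "{0..<3::nat} = {0, 1, 2}" by auto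
  then show ?thesis unfolding sides_def by auto
qed

lemma tetrahedron_is_gluing: "is_gluing 4 tetrahedron_gluing"
  unfolding is_gluing_def sides_4 ball_simps by (simp add: tetrahedron_gluing_def)

lemma tetrahedron_turn_orbit:
  "\<forall>s\<in>sides 4. tetrahedron_label (turn tetrahedron_gluing s) = tetrahedron_label s
    \<and> tetrahedron_rep (tetrahedron_label s)
        \<in> {s, turn tetrahedron_gluing s, turn tetrahedron_gluing (turn tetrahedron_gluing s)}
    \<and> card {s, turn tetrahedron_gluing s, turn tetrahedron_gluing (turn tetrahedron_gluing s)} = 3"
  unfolding sides_4 ball_simps
  by (simp add: tetrahedron_gluing_def tetrahedron_label_def tetrahedron_rep_def
      turn_def side_end_def)

lemma tetrahedron_puncture_labelling:
  "puncture_labelling 4 tetrahedron_gluing tetrahedron_label tetrahedron_rep"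
proof (unfold_locales)
  fix s assume s: "s \<in> sides 4"
  let ?turn = "turn tetrahedron_gluing"
  have "(s, ?turn s) \<in> vert_rel 4 tetrahedron_gluing"
    "(?turn s, ?turn (?turn s)) \<in> vert_rel 4 tetrahedron_gluing"
    using vert_rel_turn s turn_mem_sides[OF tetrahedron_is_gluing s] by blast+
  with bspec[OF tetrahedron_turn_orbit s]
  show "(s, tetrahedron_rep (tetrahedron_label s)) \<in> vert_rel 4 tetrahedron_gluing"
    by (auto intro: vert_rel_trans)
qed (simp_all add: tetrahedron_is_gluing tetrahedron_turn_orbit)

lemma tetrahedron_triangulation_T3:
  "ideal_triangulation 0 4 4 tetrahedron_gluing \<and> T3 4 tetrahedron_gluing"
proof -
  interpret puncture_labelling 4 tetrahedron_gluing tetrahedron_label tetrahedron_rep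
    by (rule tetrahedron_puncture_labelling)
  have "tetrahedron_label ` sides 4 = {0, 1, 2, 3}"
    unfolding sides_4 by (simp add: tetrahedron_label_def insert_commute)
  then have "card (punctures 4 tetrahedron_gluing) = 4"
    using card_punctures by simp
  moreover have "tri_connected 4 tetrahedron_gluing"
  proof (rule tri_connectedI[OF gluing])
    fix t :: nat assume "0 < t" "t < 4"
    then have "t = 1 \<or> t = 2 \<or> t = 3" by auto
    then show "\<exists>s\<in>sides 4. fst s = t \<and> fst (tetrahedron_gluing s) < t"
      by (elim disjE; intro bexI[of _ "(t, 0)"]) (simp_all add: tetrahedron_gluing_def)
  qed
  moreover have "T3 4 tetrahedron_gluing"
  proof (rule T3I)
    fix s assume s: "s \<in> sides 4"
    let ?turn = "turn tetrahedron_gluing"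
    have "{s, ?turn s, ?turn (?turn s)} \<subseteq> {t \<in> sides 4. tetrahedron_label t = tetrahedron_label s}"
      using s turn_mem_sides[OF gluing] lab_turn by auto
    then have "card {s, ?turn s, ?turn (?turn s)}
        \<le> card {t \<in> sides 4. tetrahedron_label t = tetrahedron_label s}"
      by (rule card_mono[rotated]) simp
    then show "3 \<le> card {t \<in> sides 4. tetrahedron_label t = tetrahedron_label s}"
      using bspec[OF tetrahedron_turn_orbit s] by simp
  qed
  ultimately show ?thesis
    using gluing by (simp add: ideal_triangulation_def num_arcs_def card_sides)
qed

lemma exists_T3_sphere4: "\<exists>m gl. ideal_triangulation 0 4 m gl \<and> T3 m gl"
  using tetrahedron_triangulation_T3 by blast

section \<open>Degree obstructions on the sphere\<close>

lemma even_card_involution: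
  assumes "finite A" and "\<And>x. x \<in> A \<Longrightarrow> f x \<in> A \<and> f x \<noteq> x \<and> f (f x) = x"
  shows "even (card A)"
  using assms
proof (induction "card A" arbitrary: A rule: less_induct)
  case less
  show ?case
  proof (cases "A = {}")
    case False
    then obtain a where a: "a \<in> A" by blast
    let ?B = "A - {a, f a}"
    have pair: "{a, f a} \<subseteq> A" "card {a, f a} = 2"
      using less.prems(2)[OF a] a by auto
    then have card_B: "card A = card ?B + 2"
      using less.prems(1) card_Diff_subset[of "{a, f a}" A] card_mono[of A "{a, f a}"] by simp
    have "f x \<in> ?B \<and> f x \<noteq> x \<and> f (f x) = x" if "x \<in> ?B" for x
    proof -
      have "x \<in> A" "x \<noteq> a" "x \<noteq> f a" using that by auto
      with less.prems(2)[of x] less.prems(2)[OF a] show ?thesis by auto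
    qed
    with card_B less.prems(1) have "even (card ?B)"
      by (intro less.hyps) auto
    then show ?thesis using card_B by simp
  qed simp
qed

text \<open>Euler's formula alone would also admit m = 2 n - 3, as num_arcs rounds 3 m / 2 down;
  evenness of m comes from the gluing being a fixed-point-free involution.\<close>

lemma even_triangles: "is_gluing m gl \<Longrightarrow> even m"
  using even_card_involution[of "sides m" gl] by (simp add: is_gluing_def card_sides)

lemma sphere_triangles:
  assumes "ideal_triangulation 0 n m gl"
  shows "m + 4 = 2 * n"
proof -
  have "even m" using assms even_triangles by (auto simp: ideal_triangulation_def)
  then show ?thesis
    using assms by (auto simp: ideal_triangulation_def num_arcs_def card_sides elim!: evenE)
qed

lemma no_T4_sphere5:
  assumes tri: "ideal_triangulation 0 5 m gl"
  shows "\<not> T4 m gl"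
proof
  assume "T4 m gl"
  then have "(\<Sum>v\<in>punctures m gl. 4) \<le> (\<Sum>v\<in>punctures m gl. degree m gl v)"
    unfolding T4_def by (intro sum_mono) auto
  moreover have "card (punctures m gl) = 5" "m = 6"
    using tri sphere_triangles[OF tri] by (auto simp: ideal_triangulation_def)
  ultimately show False
    using sum_degree_punctures tri by (simp add: ideal_triangulation_def)
qed

lemma no_T3half_sphere4:
  assumes tri: "ideal_triangulation 0 4 m gl"
  shows "\<not> T3half m gl"
proof
  assume T: "T3half m gl"
  have gl: "is_gluing m gl" and card: "card (punctures m gl) = 4" and "m = 4"
    using tri sphere_triangles[OF tri] by (auto simp: ideal_triangulation_def)
  then have "(0, 0) \<in> sides m" by simp
  then obtain v where v: "v \<in> punctures m gl" "4 \<le> degree m gl v"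
    using T side_end_mem_sides unfolding T3half_def punctures_eq_image side_start_def by blast
  have "(\<Sum>u\<in>punctures m gl - {v}. 3) \<le> (\<Sum>u\<in>punctures m gl - {v}. degree m gl u)"
    using T unfolding T3half_def T3_def by (intro sum_mono) auto
  moreover have "(\<Sum>u\<in>punctures m gl. degree m gl u)
      = degree m gl v + (\<Sum>u\<in>punctures m gl - {v}. degree m gl u)"
    using v(1) by (simp add: sum.remove)
  ultimately show False
    using sum_degree_punctures[OF gl] \<open>m = 4\<close> card v by simp
qed

theorem proposition5p1:
  fixes g n :: nat
  assumes "1 \<le> n" and "g = 0 \<longrightarrow> 4 \<le> n"
  shows "(\<not> (g = 0 \<and> (n = 4 \<or> n = 5)) \<longrightarrow>
            (\<exists>m gl. ideal_triangulation g n m gl \<and> T4 m gl))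
       \<and> (g = 0 \<and> n = 5 \<longrightarrow>
            (\<exists>m gl. ideal_triangulation g n m gl \<and> T3half m gl) \<and>
            \<not> (\<exists>m gl. ideal_triangulation g n m gl \<and> T4 m gl))
       \<and> (g = 0 \<and> n = 4 \<longrightarrow>
            (\<exists>m gl. ideal_triangulation g n m gl \<and> T3 m gl) \<and>
            \<not> (\<exists>m gl. ideal_triangulation g n m gl \<and> T3half m gl))"
proof (intro conjI impI)
  assume "\<not> (g = 0 \<and> (n = 4 \<or> n = 5))"
  then have "1 \<le> g \<or> (g = 0 \<and> 6 \<le> n)" using assms(2) by auto
  then show "\<exists>m gl. ideal_triangulation g n m gl \<and> T4 m gl"
    using exists_T4_positive_genus[OF _ assms(1)] exists_T4_sphere by blast
qed (use exists_T3half_sphere5 no_T4_sphere5 exists_T3_sphere4 no_T3half_sphere4 in blast)+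

end
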